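(* Let $G=(V,E)$ be a control flow graph and $p\in V$ a predicate node. For each maximal path from $p$ in $G$ there exists a maximal path from $p$ in $A_p$ with the same order of the first occurrences of all nodes from $V_p$, and vice versa (for each maximal path from $p$ in $A_p$ there exists a maximal path from $p$ in $G$ with the same order of the first occurrences of all nodes from $V_p$).
   Context: A control flow graph (CFG) is a finite directed graph $G=(V,E)$ in which every node has at most two outgoing edges; nodes with exactly two outgoing edges are predicate nodes. A path from $n_1$ is a nonempty finite or infinite sequence $n_1n_2\ldots$ of nodes with each adjacent pair an edge; it is maximal if it is infinite or its last node has no successor. For a node $p$, $V_p$ is the set of nodes occurring on all maximal paths from $p$ in $G$ (so $p\in V_p$). For $V'\subseteq V$, a $V'$-interval from $x$ to $y$ is a finite path $n_1\ldots n_k$ in $G$ with $k\ge 2$, $n_1=x\in V'$, $n_k=y\in V'$, and $n_i\notin V'$ for all $1<i<k$. $A_p$ is the directed graph with node set $V_p$ and an edge $(x,y)$ iff there is a $V_p$-interval from $x$ to $y$ in $G$. Paths and maximal paths in $A_p$ are defined as in $G$. *)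

theory Defs
  imports Main
begin

datatype 'a path = FinP "'a list" | InfP "nat \<Rightarrow> 'a"

definition cfg :: "'a set \<Rightarrow> ('a \<times> 'a) set \<Rightarrow> bool" where
  "cfg V E \<longleftrightarrow> finite V \<and> E \<subseteq> V \<times> V \<and> (\<forall>n\<in>V. card {m. (n, m) \<in> E} \<le> 2)"

definition predicate_node :: "('a \<times> 'a) set \<Rightarrow> 'a \<Rightarrow> bool" where
  "predicate_node E n \<longleftrightarrow> card {m. (n, m) \<in> E} = 2"

fun is_path :: "('a \<times> 'a) set \<Rightarrow> 'a path \<Rightarrow> bool" where
  "is_path E (FinP xs) \<longleftrightarrow> xs \<noteq> [] \<and> (\<forall>i. Suc i < length xs \<longrightarrow> (xs ! i, xs ! Suc i) \<in> E)"
| "is_path E (InfP f) \<longleftrightarrow> (\<forall>i. (f i, f (Suc i)) \<in> E)"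

fun start :: "'a path \<Rightarrow> 'a" where
  "start (FinP xs) = hd xs"
| "start (InfP f) = f 0"

fun valid_pos :: "'a path \<Rightarrow> nat \<Rightarrow> bool" where
  "valid_pos (FinP xs) i \<longleftrightarrow> i < length xs"
| "valid_pos (InfP f) i \<longleftrightarrow> True"

fun node_at :: "'a path \<Rightarrow> nat \<Rightarrow> 'a" where
  "node_at (FinP xs) i = xs ! i"
| "node_at (InfP f) i = f i"

definition path_nodes :: "'a path \<Rightarrow> 'a set" where
  "path_nodes \<pi> = {node_at \<pi> i | i. valid_pos \<pi> i}"

fun maximal_path :: "('a \<times> 'a) set \<Rightarrow> 'a path \<Rightarrow> bool" where
  "maximal_path E (FinP xs) \<longleftrightarrow> is_path E (FinP xs) \<and> (\<forall>y. (last xs, y) \<notin> E)"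
| "maximal_path E (InfP f) \<longleftrightarrow> is_path E (InfP f)"

definition Vp :: "'a set \<Rightarrow> ('a \<times> 'a) set \<Rightarrow> 'a \<Rightarrow> 'a set" where
  "Vp V E p = {v \<in> V. \<forall>\<pi>. maximal_path E \<pi> \<and> start \<pi> = p \<longrightarrow> v \<in> path_nodes \<pi>}"

definition is_interval :: "('a \<times> 'a) set \<Rightarrow> 'a set \<Rightarrow> 'a \<Rightarrow> 'a \<Rightarrow> 'a list \<Rightarrow> bool" where
  "is_interval E V' x y xs \<longleftrightarrow> is_path E (FinP xs) \<and> length xs \<ge> 2 \<and>
     hd xs = x \<and> x \<in> V' \<and> last xs = y \<and> y \<in> V' \<and>
     (\<forall>i. 0 < i \<and> i < length xs - 1 \<longrightarrow> xs ! i \<notin> V')"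

text \<open>Edges of A_p (its node set is Vp V E p).\<close>
definition Ap_edges :: "'a set \<Rightarrow> ('a \<times> 'a) set \<Rightarrow> 'a \<Rightarrow> ('a \<times> 'a) set" where
  "Ap_edges V E p = {(x, y). \<exists>xs. is_interval E (Vp V E p) x y xs}"

definition first_occ :: "'a path \<Rightarrow> 'a \<Rightarrow> nat" where
  "first_occ \<pi> x = (LEAST i. valid_pos \<pi> i \<and> node_at \<pi> i = x)"

text \<open>Equality of these relations means the same nodes
  of S occur and their first occurrences appear in the same order.\<close>
definition first_occ_order :: "'a set \<Rightarrow> 'a path \<Rightarrow> ('a \<times> 'a) set" where
  "first_occ_order S \<pi> = {(x, y). x \<in> S \<and> y \<in> S \<and> x \<in> path_nodes \<pi> \<and> y \<in> path_nodes \<pi>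
       \<and> first_occ \<pi> x \<le> first_occ \<pi> y}"

end

theory Submission
  imports Defs
begin

(* Write S = V_p and A for the graph of S-intervals.  Dropping the nodes outside S turns a
   path of G starting in S into a path of A, and conversely every path of A expands, interval
   by interval, into a path of G; neither operation changes which nodes of S occur or the order
   of their first occurrences.

   Given a maximal path of G from p, some finite prefix already contains every node of the
   finite set S.  Filtering this prefix gives a path of A, and any extension of it to a maximal
   path of A visits no new node of S.

   Conversely, expand a finite maximal path of A and extend it arbitrarily to a maximal path
   of G.  The extension meets no new node of S: the first one would be the end of an interval
   leaving the last node of the A-path, which has no successor in A.  An infinite path f of A
   lives in the finite set S, so some f N repeats an earlier f i after all nodes of f have
   appeared; expanding f 0 ... f N and the cycle f i ... f N yields a lasso-shaped infinite
   path of G. *)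

abbreviation walk :: "('a \<times> 'a) set \<Rightarrow> 'a list \<Rightarrow> bool" where
  "walk E \<equiv> successively (\<lambda>a b. (a, b) \<in> E)"

lemma is_path_FinP_iff [simp]: "is_path E (FinP xs) \<longleftrightarrow> xs \<noteq> [] \<and> walk E xs"
  by (auto simp: successively_conv_nth)

declare is_path.simps(1) [simp del]

lemma path_nodes_FinP [simp]: "path_nodes (FinP xs) = set xs"
  by (auto simp: path_nodes_def in_set_conv_nth)

lemma path_nodes_InfP [simp]: "path_nodes (InfP f) = range f"
  by (auto simp: path_nodes_def)

lemma maximal_path_imp_is_path: "maximal_path E \<pi> \<Longrightarrow> is_path E \<pi>"
  by (cases \<pi>) auto

lemma valid_pos_le: "valid_pos \<pi> j \<Longrightarrow> i \<le> j \<Longrightarrow> valid_pos \<pi> i"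
  by (cases \<pi>) auto

lemma is_path_edge:
  "is_path E \<pi> \<Longrightarrow> valid_pos \<pi> (Suc i) \<Longrightarrow> (node_at \<pi> i, node_at \<pi> (Suc i)) \<in> E"
  by (cases \<pi>) (auto dest: successively_nth)

lemma start_in_path_nodes: "is_path E \<pi> \<Longrightarrow> start \<pi> \<in> path_nodes \<pi>"
  by (cases \<pi>) auto

lemma walk_map_upt:
  "(\<And>i. m \<le> i \<Longrightarrow> Suc i < n \<Longrightarrow> (f i, f (Suc i)) \<in> E) \<Longrightarrow> walk E (map f [m..<n])"
  by (auto simp: successively_conv_nth)

subsection \<open>Prefixes\<close>

definition path_prefix :: "'a list \<Rightarrow> 'a path \<Rightarrow> bool" where
  "path_prefix xs \<pi> \<longleftrightarrow> (\<forall>i<length xs. valid_pos \<pi> i \<and> node_at \<pi> i = xs ! i)"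

lemma path_prefix_start: "is_path E \<pi> \<Longrightarrow> path_prefix [start \<pi>] \<pi>"
  by (cases \<pi>) (auto simp: path_prefix_def hd_conv_nth)

lemma path_prefix_hd: "path_prefix xs \<pi> \<Longrightarrow> xs \<noteq> [] \<Longrightarrow> hd xs = start \<pi>"
  by (cases \<pi>) (auto simp: path_prefix_def hd_conv_nth)

lemma path_prefix_set: "path_prefix xs \<pi> \<Longrightarrow> set xs \<subseteq> path_nodes \<pi>"
  by (force simp: path_prefix_def path_nodes_def in_set_conv_nth)

lemma path_prefix_is_path:
  assumes "is_path E \<pi>" "path_prefix xs \<pi>" "xs \<noteq> []"
  shows "is_path E (FinP xs)"
  unfolding is_path_FinP_iff successively_conv_nth
  using assms is_path_edge[OF assms(1)] by (metis Suc_lessD path_prefix_def)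

lemma path_prefix_map_upt:
  "valid_pos \<pi> n \<Longrightarrow> path_prefix (map (node_at \<pi>) [0..<Suc n]) \<pi>"
  by (auto simp: path_prefix_def simp del: upt_Suc intro: valid_pos_le)

lemma finite_subset_path_nodes_imp_path_prefix:
  assumes "finite T" "T \<subseteq> path_nodes \<pi>" "is_path E \<pi>"
  obtains xs where "xs \<noteq> []" "path_prefix xs \<pi>" "T \<subseteq> set xs"
proof -
  have "T \<subseteq> node_at \<pi> ` {i. valid_pos \<pi> i}"
    using assms(2) by (auto simp: path_nodes_def)
  then obtain C where C: "C \<subseteq> {i. valid_pos \<pi> i}" "T = node_at \<pi> ` C"
    and "finite C" using finite_subset_image[OF assms(1)] by blast
  define n where "n = Max (insert 0 C)"
  have n_in: "n \<in> insert 0 C"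
    using \<open>finite C\<close> unfolding n_def by (intro Max_in) auto
  have le_n: "i \<le> n" if "i \<in> C" for i
    using \<open>finite C\<close> that by (simp add: n_def)
  have "valid_pos \<pi> n"
    using n_in C(1) assms(3) by (cases \<pi>) auto
  show ?thesis
  proof (rule that)
    show "map (node_at \<pi>) [0..<Suc n] \<noteq> []" by simp
    show "path_prefix (map (node_at \<pi>) [0..<Suc n]) \<pi>"
      using \<open>valid_pos \<pi> n\<close> by (rule path_prefix_map_upt)
    have "C \<subseteq> {0..<Suc n}" using le_n by fastforce
    then show "T \<subseteq> set (map (node_at \<pi>) [0..<Suc n])"
      using C(2) by (simp del: upt_Suc add: image_mono)
  qed
qed

lemma path_prefix_extend_to_node:
  assumes "path_prefix xs \<pi>" "z \<in> path_nodes \<pi>" "z \<notin> set xs"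
  obtains ys where "path_prefix (xs @ ys) \<pi>" "z \<in> set ys"
proof -
  obtain j where j: "valid_pos \<pi> j" "node_at \<pi> j = z"
    using assms(2) by (auto simp: path_nodes_def)
  have "length xs \<le> j"
  proof (rule ccontr)
    assume "\<not> length xs \<le> j"
    then have "z = xs ! j" using assms(1) j(2) by (simp add: path_prefix_def)
    then show False using assms(3) \<open>\<not> length xs \<le> j\<close> by simp
  qed
  define ys where "ys = map (node_at \<pi>) [length xs..<Suc j]"
  show ?thesis
  proof (rule that)
    show "z \<in> set ys" using \<open>length xs \<le> j\<close> j by (auto simp: ys_def simp del: upt_Suc)
    show "path_prefix (xs @ ys) \<pi>"
      using assms(1) j(1) \<open>length xs \<le> j\<close>
      by (auto simp: path_prefix_def ys_def nth_append simp del: upt_Suc intro: valid_pos_le)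
  qed
qed

subsection \<open>Order of first occurrences\<close>

lemma first_occ_path_prefix:
  assumes "path_prefix xs \<pi>" "x \<in> set xs"
  shows "first_occ \<pi> x = first_occ (FinP xs) x"
proof -
  let ?in_list = "\<lambda>i. valid_pos (FinP xs) i \<and> node_at (FinP xs) i = x"
  let ?on_path = "\<lambda>i. valid_pos \<pi> i \<and> node_at \<pi> i = x"
  obtain k where "?in_list k" using assms(2) by (auto simp: in_set_conv_nth)
  then have first: "?in_list (Least ?in_list)" by (rule LeastI)
  have "Least ?on_path = Least ?in_list"
  proof (rule Least_equality)
    show "?on_path (Least ?in_list)" using first assms(1) by (auto simp: path_prefix_def)
    fix i assume "?on_path i"
    show "Least ?in_list \<le> i"
    proof (cases "i < length xs")
      case True
      then have "?in_list i" using \<open>?on_path i\<close> assms(1) by (auto simp: path_prefix_def)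
      then show ?thesis by (rule Least_le)
    next
      case False
      then show ?thesis using first by auto
    qed
  qed
  then show ?thesis by (simp add: first_occ_def)
qed

lemma first_occ_order_path_prefix:
  assumes "path_prefix xs \<pi>" "S \<inter> path_nodes \<pi> \<subseteq> set xs"
  shows "first_occ_order S \<pi> = first_occ_order S (FinP xs)"
proof -
  have same_nodes: "x \<in> S \<and> x \<in> path_nodes \<pi> \<longleftrightarrow> x \<in> S \<and> x \<in> set xs" for x
    using assms path_prefix_set[OF assms(1)] by auto
  have same_occ: "first_occ \<pi> x = first_occ (FinP xs) x" if "x \<in> S" "x \<in> path_nodes \<pi>" for x
    using that same_nodes first_occ_path_prefix[OF assms(1)] by blast
  show ?thesis
    unfolding first_occ_order_def path_nodes_FinP
  proof (intro Collect_cong prod.case_cong refl)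
    fix x y
    show "(x \<in> S \<and> y \<in> S \<and> x \<in> path_nodes \<pi> \<and> y \<in> path_nodes \<pi> \<and> first_occ \<pi> x \<le> first_occ \<pi> y) \<longleftrightarrow>
      (x \<in> S \<and> y \<in> S \<and> x \<in> set xs \<and> y \<in> set xs \<and> first_occ (FinP xs) x \<le> first_occ (FinP xs) y)"
      using same_nodes[of x] same_nodes[of y] same_occ[of x] same_occ[of y] by metis
  qed
qed

lemma first_occ_Cons:
  assumes "x \<in> set (a # xs)"
  shows "first_occ (FinP (a # xs)) x = (if a = x then 0 else Suc (first_occ (FinP xs) x))"
proof (cases "a = x")
  case True
  then show ?thesis by (auto simp: first_occ_def intro!: Least_equality)
next
  case False
  then obtain k where "k < length xs" "xs ! k = x" using assms by (auto simp: in_set_conv_nth)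
  then have "(LEAST i. i < length (a # xs) \<and> (a # xs) ! i = x)
      = Suc (LEAST i. i < length xs \<and> xs ! i = x)"
    using False by (subst Least_Suc[of _ "Suc k"]) auto
  then show ?thesis using False by (simp add: first_occ_def)
qed

lemma first_occ_le_iff_takeWhile:
  "x \<in> set xs \<Longrightarrow> y \<in> set xs \<Longrightarrow>
   first_occ (FinP xs) x \<le> first_occ (FinP xs) y \<longleftrightarrow> x = y \<or> x \<in> set (takeWhile (\<lambda>z. z \<noteq> y) xs)"
  by (induction xs) (auto simp: first_occ_Cons)

lemma first_occ_order_FinP:
  "first_occ_order S (FinP xs) =
     {(x, y). x \<in> S \<and> y \<in> S \<and> y \<in> set xs \<and> (x = y \<or> x \<in> set (takeWhile (\<lambda>z. z \<noteq> y) xs))}"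
  unfolding first_occ_order_def path_nodes_FinP
  using first_occ_le_iff_takeWhile set_takeWhileD by fastforce

lemma takeWhile_neq_filter:
  "P y \<Longrightarrow> takeWhile (\<lambda>z. z \<noteq> y) (filter P xs) = filter P (takeWhile (\<lambda>z. z \<noteq> y) xs)"
  by (induction xs) auto

lemma first_occ_order_filter:
  "first_occ_order S (FinP (filter (\<lambda>x. x \<in> S) xs)) = first_occ_order S (FinP xs)"
  unfolding first_occ_order_FinP by (auto simp: takeWhile_neq_filter)

lemma first_occ_order_filter_path_prefix:
  assumes "path_prefix xs \<pi>" "S \<inter> path_nodes \<pi> \<subseteq> set xs"
  shows "first_occ_order S \<pi> = first_occ_order S (FinP (filter (\<lambda>x. x \<in> S) xs))"
  using first_occ_order_path_prefix[OF assms] by (simp add: first_occ_order_filter)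

subsection \<open>Building maximal paths\<close>

fun prepend :: "'a list \<Rightarrow> 'a path \<Rightarrow> 'a path" where
  "prepend us (FinP xs) = FinP (us @ xs)"
| "prepend us (InfP f) = InfP (\<lambda>i. if i < length us then us ! i else f (i - length us))"

lemma path_nodes_prepend: "path_nodes (prepend us \<pi>) = set us \<union> path_nodes \<pi>"
proof (cases \<pi>)
  case (InfP f)
  let ?g = "\<lambda>i. if i < length us then us ! i else f (i - length us)"
  have "range ?g \<subseteq> set us \<union> range f" by auto
  moreover have "us ! i \<in> range ?g" if "i < length us" for i
    using that by (intro range_eqI[of _ _ i]) simp
  moreover have "f i \<in> range ?g" for i
    by (intro range_eqI[of _ _ "i + length us"]) simp
  ultimately show ?thesis using InfP by (auto simp: in_set_conv_nth)
qed simp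

lemma path_prefix_prepend:
  assumes "path_prefix xs \<pi>"
  shows "path_prefix (us @ xs) (prepend us \<pi>)"
proof -
  have "valid_pos (prepend us \<pi>) i \<and> node_at (prepend us \<pi>) i = (us @ xs) ! i"
    if "i < length (us @ xs)" for i
  proof (cases "i < length us")
    case True
    then show ?thesis by (cases \<pi>) (auto simp: nth_append)
  next
    case False
    then have "valid_pos \<pi> (i - length us) \<and> node_at \<pi> (i - length us) = xs ! (i - length us)"
      using assms that by (auto simp: path_prefix_def)
    then show ?thesis using False by (cases \<pi>) (auto simp: nth_append)
  qed
  then show ?thesis by (simp add: path_prefix_def)
qed

lemma maximal_path_prepend:
  assumes "walk E (us @ [start \<pi>])" "maximal_path E \<pi>"
  shows "maximal_path E (prepend us \<pi>)"
proof (cases \<pi>)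
  case (FinP xs)
  then show ?thesis using assms by (auto simp: successively_append_iff)
next
  case (InfP f)
  have us_edge: "(us ! i, us ! Suc i) \<in> E" if "Suc i < length us" for i
    using assms(1) that by (auto simp: successively_append_iff dest: successively_nth)
  have last_edge: "(last us, f 0) \<in> E" if "us \<noteq> []"
    using assms(1) that InfP by (simp add: successively_append_iff)
  have f_edge: "(f i, f (Suc i)) \<in> E" for i
    using assms(2) InfP by simp
  have "(if i < length us then us ! i else f (i - length us),
      if Suc i < length us then us ! Suc i else f (Suc i - length us)) \<in> E" for i
  proof -
    consider "Suc i < length us" | "Suc i = length us" | "length us \<le> i" by linarith
    then show ?thesis
    proof cases
      case 2
      then have "us \<noteq> []" "i = length us - 1" by auto
      then show ?thesis using last_edge by (simp add: last_conv_nth)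
    qed (use us_edge f_edge in \<open>auto simp: Suc_diff_le\<close>)
  qed
  then show ?thesis using InfP by simp
qed

lemma maximal_path_from: "\<exists>\<pi>. maximal_path E \<pi> \<and> start \<pi> = x"
proof -
  define h where "h n = ((\<lambda>z. SOME y. (z, y) \<in> E) ^^ n) x" for n
  have step: "(h n, h (Suc n)) \<in> E" if "\<exists>y. (h n, y) \<in> E" for n
    using someI_ex[OF that] by (simp add: h_def)
  show ?thesis
  proof (cases "\<forall>n. \<exists>y. (h n, y) \<in> E")
    case True
    then have "maximal_path E (InfP h)" using step by simp
    then show ?thesis by (intro exI[of _ "InfP h"]) (simp add: h_def)
  next
    case False
    then obtain k where stuck: "\<nexists>y. (h k, y) \<in> E" and "\<forall>n<k. \<exists>y. (h n, y) \<in> E"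
      using exists_least_iff[of "\<lambda>n. \<nexists>y. (h n, y) \<in> E"] by blast
    then have "walk E (map h [0..<Suc k])"
      using step by (intro walk_map_upt) simp
    then have "maximal_path E (FinP (map h [0..<Suc k]))" using stuck by simp
    then show ?thesis
      by (intro exI[of _ "FinP (map h [0..<Suc k])"]) (simp add: h_def hd_map del: upt_Suc)
  qed
qed

lemma path_prefix_maximal_path:
  assumes "is_path E (FinP xs)"
  obtains \<pi> where "maximal_path E \<pi>" "path_prefix xs \<pi>"
proof -
  obtain \<pi> where \<pi>: "maximal_path E \<pi>" "start \<pi> = last xs"
    using maximal_path_from[of E "last xs"] by blast
  have xs: "butlast xs @ [start \<pi>] = xs" using assms \<pi>(2) by simp
  show ?thesis
  proof (rule that)
    show "maximal_path E (prepend (butlast xs) \<pi>)"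
      using assms \<pi>(1) by (intro maximal_path_prepend) (simp_all add: xs)
    have "path_prefix (butlast xs @ [start \<pi>]) (prepend (butlast xs) \<pi>)"
      using \<pi>(1) by (intro path_prefix_prepend path_prefix_start maximal_path_imp_is_path)
    then show "path_prefix xs (prepend (butlast xs) \<pi>)" by (simp only: xs)
  qed
qed

definition cycle_path :: "'a list \<Rightarrow> 'a path" where
  "cycle_path c = InfP (\<lambda>n. c ! (n mod length c))"

lemma
  assumes "c \<noteq> []"
  shows path_nodes_cycle_path: "path_nodes (cycle_path c) = set c"
    and start_cycle_path: "start (cycle_path c) = hd c"
proof -
  have "c ! (n mod length c) \<in> set c" for n
    using assms by simp
  moreover have "c ! i \<in> range (\<lambda>n. c ! (n mod length c))" if "i < length c" for i
    using that by (intro range_eqI[of _ _ i]) simp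
  ultimately show "path_nodes (cycle_path c) = set c"
    by (auto simp: cycle_path_def in_set_conv_nth)
  show "start (cycle_path c) = hd c"
    using assms by (simp add: cycle_path_def hd_conv_nth)
qed

lemma maximal_path_cycle_path:
  assumes "c \<noteq> []" "walk E (c @ [hd c])"
  shows "maximal_path E (cycle_path c)"
  unfolding cycle_path_def maximal_path.simps is_path.simps
proof
  fix n
  define r where "r = n mod length c"
  have r: "r < length c" using assms(1) by (simp add: r_def)
  have edge: "(c ! r, (c @ [hd c]) ! Suc r) \<in> E"
    using successively_nth[OF assms(2), of r] r by (simp add: nth_append)
  show "(c ! (n mod length c), c ! (Suc n mod length c)) \<in> E"
  proof (cases "Suc r = length c")
    case True
    then have "Suc n mod length c = 0" by (simp add: r_def mod_Suc)
    then show ?thesis using edge True assms(1) by (simp add: r_def nth_append hd_conv_nth)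
  next
    case False
    then have "Suc n mod length c = Suc r" by (simp add: r_def mod_Suc)
    then show ?thesis using edge False r by (simp add: r_def nth_append)
  qed
qed

lemma lasso_maximal_path:
  assumes "walk E (x # xs)" "walk E (y # zs)" "last (x # xs) = y" "zs \<noteq> []" "last zs = y"
  obtains \<pi> where "maximal_path E \<pi>" "path_prefix (x # xs) \<pi>"
    "path_nodes \<pi> \<subseteq> set (x # xs) \<union> set zs"
proof -
  define stem where "stem = butlast (x # xs)"
  define cycle where "cycle = y # butlast zs"
  have stem: "stem @ [hd cycle] = x # xs"
    unfolding stem_def cycle_def list.sel(1) assms(3)[symmetric]
    by (rule append_butlast_last_id) simp
  have cycle: "cycle @ [hd cycle] = y # zs"
    unfolding cycle_def list.sel(1) assms(5)[symmetric]
    using append_butlast_last_id[OF assms(4)] by simp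
  let ?\<pi> = "prepend stem (cycle_path cycle)"
  show ?thesis
  proof (rule that)
    have "maximal_path E (cycle_path cycle)"
      using assms(2) cycle by (intro maximal_path_cycle_path) (simp_all add: cycle_def)
    then show "maximal_path E ?\<pi>"
      using assms(1) stem
      by (intro maximal_path_prepend) (simp_all add: start_cycle_path cycle_def)
    have "path_prefix (stem @ [start (cycle_path cycle)]) ?\<pi>"
      using \<open>maximal_path E (cycle_path cycle)\<close>
      by (intro path_prefix_prepend path_prefix_start maximal_path_imp_is_path)
    then show "path_prefix (x # xs) ?\<pi>"
      using stem by (simp add: start_cycle_path cycle_def)
    have "set stem \<subseteq> set (x # xs)" "set cycle \<subseteq> set (y # zs)"
      using stem cycle by (metis set_append Un_upper1)+
    moreover have "y \<in> set (x # xs)" using assms(3) by (metis last_in_set list.distinct(1))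
    ultimately show "path_nodes ?\<pi> \<subseteq> set (x # xs) \<union> set zs"
      by (auto simp: path_nodes_prepend path_nodes_cycle_path cycle_def)
  qed
qed

subsection \<open>The graph of intervals\<close>

definition interval_edges :: "('a \<times> 'a) set \<Rightarrow> 'a set \<Rightarrow> ('a \<times> 'a) set" where
  "interval_edges E S = {(x, y). \<exists>xs. is_interval E S x y xs}"

lemma interval_edges_iff:
  "(x, y) \<in> interval_edges E S \<longleftrightarrow>
     x \<in> S \<and> y \<in> S \<and> (\<exists>m. set m \<inter> S = {} \<and> walk E (x # m @ [y]))"
proof
  assume "(x, y) \<in> interval_edges E S"
  then obtain xs where xs: "is_interval E S x y xs" by (auto simp: interval_edges_def)
  define m where "m = butlast (tl xs)"
  have "xs = x # m @ [y]"
    using xs unfolding is_interval_def m_def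
    by (cases xs) (auto simp: Suc_le_eq intro!: append_butlast_last_id[symmetric])
  moreover have "set m \<inter> S = {}"
  proof -
    have "m ! k \<notin> S" if "k < length m" for k
      using xs that \<open>xs = x # m @ [y]\<close> unfolding is_interval_def
      by (auto dest!: spec[of _ "Suc k"] simp: nth_append)
    then show ?thesis by (auto simp: in_set_conv_nth)
  qed
  ultimately show "x \<in> S \<and> y \<in> S \<and> (\<exists>m. set m \<inter> S = {} \<and> walk E (x # m @ [y]))"
    using xs unfolding is_interval_def by auto
next
  assume "x \<in> S \<and> y \<in> S \<and> (\<exists>m. set m \<inter> S = {} \<and> walk E (x # m @ [y]))"
  then obtain m where "x \<in> S" "y \<in> S" "set m \<inter> S = {}" "walk E (x # m @ [y])" by blast
  moreover have "(x # m @ [y]) ! i \<in> set m" if "0 < i" "i < length (x # m @ [y]) - 1" for i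
    using that by (cases i) (auto simp: nth_append)
  ultimately have "is_interval E S x y (x # m @ [y])"
    unfolding is_interval_def by auto
  then show "(x, y) \<in> interval_edges E S" by (auto simp: interval_edges_def)
qed

lemma interval_edge_to_first_in_set:
  assumes "walk E (x # u @ y # w)" "x \<in> S" "y \<in> S" "set u \<inter> S = {}"
  shows "(x, y) \<in> interval_edges E S"
proof -
  have "walk E ((x # u @ [y]) @ w)" using assms(1) by simp
  then have "walk E (x # u @ [y])" by (simp only: successively_append_iff)
  then show ?thesis using assms(2-4) by (auto simp: interval_edges_iff)
qed

lemma path_nodes_interval_path:
  assumes "is_path (interval_edges E S) \<pi>" "start \<pi> \<in> S"
  shows "path_nodes \<pi> \<subseteq> S"
proof -
  have "node_at \<pi> i \<in> S" if "valid_pos \<pi> i" for i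
    using that
  proof (induction i)
    case 0
    then show ?case using assms(2) by (cases \<pi>) (auto simp: hd_conv_nth)
  next
    case (Suc i)
    then show ?case using is_path_edge[OF assms(1) Suc.prems] by (simp add: interval_edges_iff)
  qed
  then show ?thesis by (auto simp: path_nodes_def)
qed

lemma walk_filter_interval_edges:
  assumes "walk E (x # u @ xs)" "x \<in> S" "set u \<inter> S = {}"
  shows "walk (interval_edges E S) (x # filter (\<lambda>z. z \<in> S) xs)"
  using assms
proof (induction xs arbitrary: x u)
  case Nil
  then show ?case by simp
next
  case (Cons y ys)
  show ?case
  proof (cases "y \<in> S")
    case True
    have "walk E ((x # u) @ y # ys)" using Cons.prems(1) by simp
    then have "walk E (y # ys)" by (simp only: successively_append_iff)
    then have "walk (interval_edges E S) (y # filter (\<lambda>z. z \<in> S) ys)"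
      using Cons.IH[of y "[]"] True by simp
    moreover have "(x, y) \<in> interval_edges E S"
      using Cons.prems True by (intro interval_edge_to_first_in_set) auto
    ultimately show ?thesis using True by simp
  next
    case False
    then show ?thesis using Cons.IH[of x "u @ [y]"] Cons.prems by simp
  qed
qed

lemma interval_walk_expand:
  assumes "walk (interval_edges E S) (x # ys)" "x \<in> S"
  shows "\<exists>xs. walk E (x # xs) \<and> last (x # xs) = last (x # ys) \<and> filter (\<lambda>z. z \<in> S) xs = ys"
  using assms
proof (induction ys arbitrary: x)
  case Nil
  then show ?case by (intro exI[of _ "[]"]) simp
next
  case (Cons y ys)
  then obtain m where m: "y \<in> S" "set m \<inter> S = {}" "walk E (x # m @ [y])"
    by (auto simp: interval_edges_iff)
  obtain xs where xs: "walk E (y # xs)" "last (y # xs) = last (y # ys)"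
    "filter (\<lambda>z. z \<in> S) xs = ys"
    using Cons.IH[of y] Cons.prems(1) m(1) by (auto simp: successively_Cons)
  have "walk E ((x # m) @ [y])" using m(3) by simp
  then have "walk E ((x # m) @ y # xs)"
    using xs(1) by (simp only: successively_append_iff) simp
  moreover have "filter (\<lambda>z. z \<in> S) (m @ y # xs) = y # ys"
    using m xs(3) by (auto simp: filter_empty_conv)
  ultimately show ?case using xs(2) by (intro exI[of _ "m @ y # xs"]) simp
qed

subsection \<open>Transferring maximal paths\<close>

lemma maximal_path_to_interval_path:
  assumes "finite S" "maximal_path E \<pi>" "start \<pi> \<in> S" "S \<subseteq> path_nodes \<pi>"
  obtains \<pi>' where "maximal_path (interval_edges E S) \<pi>'" "start \<pi>' = start \<pi>"
    "first_occ_order S \<pi>' = first_occ_order S \<pi>"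
proof -
  have "is_path E \<pi>" using assms(2) by (rule maximal_path_imp_is_path)
  then obtain xs where xs: "xs \<noteq> []" "path_prefix xs \<pi>" "S \<subseteq> set xs"
    using finite_subset_path_nodes_imp_path_prefix assms(1,4) by blast
  moreover have "hd xs = start \<pi>" using path_prefix_hd xs by blast
  ultimately obtain xs' where xs': "xs = start \<pi> # xs'" by (cases xs) auto
  let ?ys = "filter (\<lambda>x. x \<in> S) xs"
  have "walk E (start \<pi> # xs')"
    using path_prefix_is_path[OF \<open>is_path E \<pi>\<close> xs(2,1)] xs' by simp
  then have "is_path (interval_edges E S) (FinP ?ys)"
    using walk_filter_interval_edges[of E "start \<pi>" "[]" xs' S] assms(3) xs' by simp
  then obtain \<pi>' where \<pi>': "maximal_path (interval_edges E S) \<pi>'" "path_prefix ?ys \<pi>'"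
    by (rule path_prefix_maximal_path)
  show ?thesis
  proof (rule that)
    show "maximal_path (interval_edges E S) \<pi>'" by (fact \<pi>'(1))
    show "start \<pi>' = start \<pi>"
      using path_prefix_hd[OF \<pi>'(2)] xs' assms(3) by simp
    have "first_occ_order S \<pi>' = first_occ_order S (FinP ?ys)"
      using \<pi>'(2) xs(3) by (intro first_occ_order_path_prefix) auto
    also have "\<dots> = first_occ_order S \<pi>"
      using xs by (intro first_occ_order_filter_path_prefix[symmetric]) auto
    finally show "first_occ_order S \<pi>' = first_occ_order S \<pi>" .
  qed
qed

lemma finite_maximal_interval_path_to_path:
  assumes "maximal_path (interval_edges E S) (FinP (x # ys))" "x \<in> S"
  obtains \<pi> where "maximal_path E \<pi>" "start \<pi> = x"
    "first_occ_order S \<pi> = first_occ_order S (FinP (x # ys))"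
proof -
  have stuck: "(last (x # ys), y) \<notin> interval_edges E S" for y
    using assms(1) by simp
  have "is_path (interval_edges E S) (FinP (x # ys))" using assms(1) by simp
  then have "set (x # ys) \<subseteq> S"
    using path_nodes_interval_path[of E S "FinP (x # ys)"] assms(2) by simp
  then have "last (x # ys) \<in> S" using last_in_set by blast
  have "walk (interval_edges E S) (x # ys)" using assms(1) by simp
  then obtain xs where xs: "walk E (x # xs)" "last (x # xs) = last (x # ys)"
    "filter (\<lambda>z. z \<in> S) xs = ys"
    using interval_walk_expand[OF _ assms(2)] by blast
  have "is_path E (FinP (x # xs))" using xs(1) by simp
  then obtain \<pi> where \<pi>: "maximal_path E \<pi>" "path_prefix (x # xs) \<pi>"
    by (rule path_prefix_maximal_path)
  have "S \<inter> path_nodes \<pi> \<subseteq> set (x # xs)"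
  proof (rule ccontr)
    assume "\<not> ?thesis"
    then obtain z where z: "z \<in> S" "z \<in> path_nodes \<pi>" "z \<notin> set (x # xs)" by blast
    then obtain zs where zs: "path_prefix ((x # xs) @ zs) \<pi>" "z \<in> set zs"
      using path_prefix_extend_to_node[OF \<pi>(2)] by blast
    then obtain u y w where split: "zs = u @ y # w" "y \<in> S" "\<forall>v\<in>set u. v \<notin> S"
      using z(1) split_list_first_prop[of zs "\<lambda>v. v \<in> S"] by blast
    have "walk E ((x # xs) @ zs)"
      using path_prefix_is_path[OF maximal_path_imp_is_path[OF \<pi>(1)] zs(1)] by simp
    moreover have "(x # xs) @ zs = butlast (x # xs) @ last (x # xs) # zs"
      by (subst append_butlast_last_id[symmetric, of "x # xs"]) simp_all
    ultimately have "walk E (butlast (x # xs) @ last (x # xs) # zs)" by (simp only:)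
    then have "walk E (last (x # xs) # u @ y # w)"
      unfolding split(1) by (simp only: successively_append_iff)
    then have "(last (x # ys), y) \<in> interval_edges E S"
      using xs(2) split \<open>last (x # ys) \<in> S\<close> by (intro interval_edge_to_first_in_set) auto
    then show False using stuck by blast
  qed
  then have "first_occ_order S \<pi> = first_occ_order S (FinP (x # ys))"
    using first_occ_order_filter_path_prefix[OF \<pi>(2)] xs(3) assms(2) by simp
  moreover have "start \<pi> = x" using path_prefix_hd[OF \<pi>(2)] by simp
  ultimately show ?thesis using that \<pi>(1) by blast
qed

lemma finite_range_imp_repeat:
  fixes f :: "nat \<Rightarrow> 'a"
  assumes "finite (range f)"
  obtains N i where "range f \<subseteq> f ` {..<N}" "i < N" "f i = f N"
proof -
  obtain C where "finite C" "range f = f ` C"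
    using finite_subset_image[OF assms order_refl] by blast
  moreover obtain N where "\<forall>n\<in>C. n < N"
    using finite_nat_set_iff_bounded[THEN iffD1, OF \<open>finite C\<close>] by blast
  ultimately have N: "range f \<subseteq> f ` {..<N}" by auto
  then have "f N \<in> f ` {..<N}" by blast
  then obtain i where "i < N" "f i = f N" by auto
  with N show ?thesis by (rule that)
qed

lemma interval_path_segment_expand:
  assumes "is_path (interval_edges E S) (InfP f)" "f m \<in> S" "m \<le> N"
  obtains xs where "walk E (f m # xs)" "last (f m # xs) = f N"
    "filter (\<lambda>z. z \<in> S) xs = map f [Suc m..<Suc N]"
proof -
  have "walk (interval_edges E S) (map f [m..<Suc N])"
    using assms(1) by (intro walk_map_upt) simp
  then have "walk (interval_edges E S) (f m # map f [Suc m..<Suc N])"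
    using assms(3) by (simp add: upt_conv_Cons del: upt_Suc)
  then obtain xs where xs: "walk E (f m # xs)"
    "last (f m # xs) = last (f m # map f [Suc m..<Suc N])"
    "filter (\<lambda>z. z \<in> S) xs = map f [Suc m..<Suc N]"
    using interval_walk_expand[OF _ assms(2)] by blast
  moreover have "last (f m # map f [Suc m..<Suc N]) = f N"
    using assms(3) by (cases "m = N") (simp_all add: last_map)
  ultimately show ?thesis by (intro that[of xs]) simp_all
qed

lemma infinite_interval_path_to_path:
  assumes "finite S" "is_path (interval_edges E S) (InfP f)" "f 0 \<in> S"
  obtains \<pi> where "maximal_path E \<pi>" "start \<pi> = f 0"
    "first_occ_order S \<pi> = first_occ_order S (InfP f)"
proof -
  have "range f \<subseteq> S" using path_nodes_interval_path[OF assms(2)] assms(3) by simp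
  then have "finite (range f)" using assms(1) finite_subset by blast
  then obtain N i where N: "range f \<subseteq> f ` {..<N}" "i < N" "f i = f N"
    by (rule finite_range_imp_repeat)
  obtain xs where xs: "walk E (f 0 # xs)" "last (f 0 # xs) = f N"
    "filter (\<lambda>z. z \<in> S) xs = map f [Suc 0..<Suc N]"
    by (rule interval_path_segment_expand[OF assms(2,3) le0[of N]])
  have "f i \<in> S" "i \<le> N" using \<open>range f \<subseteq> S\<close> N(2) by auto
  then obtain zs where zs: "walk E (f i # zs)" "last (f i # zs) = f N"
    "filter (\<lambda>z. z \<in> S) zs = map f [Suc i..<Suc N]"
    by (rule interval_path_segment_expand[OF assms(2)])
  have "zs \<noteq> []" using zs(3) N(2) by auto
  obtain \<pi> where \<pi>: "maximal_path E \<pi>" "path_prefix (f 0 # xs) \<pi>"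
    "path_nodes \<pi> \<subseteq> set (f 0 # xs) \<union> set zs"
    using lasso_maximal_path[OF xs(1) zs(1)] xs(2) zs(2) N(3) \<open>zs \<noteq> []\<close> by auto
  have "S \<inter> set zs = set (filter (\<lambda>z. z \<in> S) zs)" by auto
  also have "\<dots> \<subseteq> set (filter (\<lambda>z. z \<in> S) xs)"
    using zs(3) xs(3) by (auto simp del: upt_Suc)
  also have "\<dots> \<subseteq> set xs" by auto
  finally have "S \<inter> set zs \<subseteq> set xs" .
  then have "S \<inter> path_nodes \<pi> \<subseteq> set (f 0 # xs)" using \<pi>(3) by auto
  then have "first_occ_order S \<pi> = first_occ_order S (FinP (filter (\<lambda>z. z \<in> S) (f 0 # xs)))"
    by (rule first_occ_order_filter_path_prefix[OF \<pi>(2)])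
  also have "filter (\<lambda>z. z \<in> S) (f 0 # xs) = map f [0..<Suc N]"
    using xs(3) assms(3) by (simp add: upt_conv_Cons del: upt_Suc)
  also have "first_occ_order S (FinP (map f [0..<Suc N])) = first_occ_order S (InfP f)"
    using N(1) by (intro first_occ_order_path_prefix[symmetric])
      (auto simp: path_prefix_def simp del: upt_Suc)
  finally show ?thesis using that \<pi>(1) path_prefix_hd[OF \<pi>(2)] by simp
qed

lemma maximal_interval_path_to_path:
  assumes "finite S" "maximal_path (interval_edges E S) \<pi>'" "start \<pi>' \<in> S"
  obtains \<pi> where "maximal_path E \<pi>" "start \<pi> = start \<pi>'"
    "first_occ_order S \<pi> = first_occ_order S \<pi>'"
proof (cases \<pi>')
  case (FinP ys)
  then obtain y ys' where "ys = y # ys'" using assms(2) by (cases ys) auto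
  then show ?thesis
    using finite_maximal_interval_path_to_path[of E S y ys'] that assms(2,3) FinP by auto
next
  case (InfP f)
  then show ?thesis
    using infinite_interval_path_to_path[OF assms(1), of E f] that assms(2,3) by auto
qed

lemma start_in_Vp: "p \<in> V \<Longrightarrow> p \<in> Vp V E p"
  by (auto simp: Vp_def dest: maximal_path_imp_is_path start_in_path_nodes)

lemma finite_Vp: "cfg V E \<Longrightarrow> finite (Vp V E p)"
  by (auto simp: cfg_def Vp_def)

lemma Ap_edges_eq_interval_edges: "Ap_edges V E p = interval_edges E (Vp V E p)"
  by (simp add: Ap_edges_def interval_edges_def)

theorem lemma4p4:
  fixes V :: "'a set" and E :: "('a \<times> 'a) set" and p :: 'a
  assumes "cfg V E" and "p \<in> V" and "predicate_node E p"
  shows "(\<forall>\<pi>. maximal_path E \<pi> \<and> start \<pi> = p \<longrightarrow>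
            (\<exists>\<pi>'. maximal_path (Ap_edges V E p) \<pi>' \<and> start \<pi>' = p \<and>
                  first_occ_order (Vp V E p) \<pi>' = first_occ_order (Vp V E p) \<pi>))
       \<and> (\<forall>\<pi>'. maximal_path (Ap_edges V E p) \<pi>' \<and> start \<pi>' = p \<longrightarrow>
            (\<exists>\<pi>. maximal_path E \<pi> \<and> start \<pi> = p \<and>
                  first_occ_order (Vp V E p) \<pi> = first_occ_order (Vp V E p) \<pi>'))"
proof -
  let ?S = "Vp V E p"
  have finite: "finite ?S" using assms(1) by (rule finite_Vp)
  have p: "p \<in> ?S" using assms(2) by (rule start_in_Vp)
  show ?thesis unfolding Ap_edges_eq_interval_edges
  proof (intro conjI allI impI; elim conjE)
    fix \<pi> assume \<pi>: "maximal_path E \<pi>" "start \<pi> = p"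
    then have "?S \<subseteq> path_nodes \<pi>" by (auto simp: Vp_def)
    then show "\<exists>\<pi>'. maximal_path (interval_edges E ?S) \<pi>' \<and> start \<pi>' = p \<and>
        first_occ_order ?S \<pi>' = first_occ_order ?S \<pi>"
      using maximal_path_to_interval_path[OF finite \<pi>(1)] \<pi>(2) p by metis
  next
    fix \<pi>' assume \<pi>': "maximal_path (interval_edges E ?S) \<pi>'" "start \<pi>' = p"
    then show "\<exists>\<pi>. maximal_path E \<pi> \<and> start \<pi> = p \<and>
        first_occ_order ?S \<pi> = first_occ_order ?S \<pi>'"
      using maximal_interval_path_to_path[OF finite \<pi>'(1)] p by metis
  qed
qed

end
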